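(* Let $\mathrm{Alg}_r(G_1)$ be the category of reachable pointed automata over $\Sigma$ and $\mathcal{C}$ the category of congruences on the monoid $\Sigma^\ast$ (both as described in the context). Define $T:\mathrm{Alg}_r(G_1)\to\mathcal{C}$ on objects by $T(X,\overline{x},\delta)=\ker\delta^\sharp$, and on morphisms by sending a morphism $h:(X,\overline{x},\delta_X)\to(Y,\overline{y},\delta_Y)$ to the inclusion $\ker\delta_X^\sharp\subseteq\ker\delta_Y^\sharp$. Define $M:\mathcal{C}\to\mathrm{Alg}_r(G_1)$ on objects by $M(C)=(\Sigma^\ast/C,\,[\epsilon]_C,\,\sigma_C)$ with $\sigma_C([w]_C)(a)=[wa]_C$ for $w\in\Sigma^\ast$, $a\in\Sigma$, and on a morphism $C\subseteq D$ by the map $[w]_C\mapsto[w]_D$. Then $T$ and $M$ are well-defined functors and $T$ is a right adjoint of $M$ (i.e. $M\dashv T$).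
   Context: $\Sigma$ is a fixed finite alphabet, $\Sigma^\ast$ the free monoid of finite words with empty word $\epsilon$. A pointed automaton is a triple $(X,\overline{x},\delta)$ with $X$ a set (possibly infinite), $\overline{x}\in X$ and $\delta:X\to X^\Sigma$; $\delta$ is extended to $X\to X^{\Sigma^\ast}$ by $\delta(x)(\epsilon)=x$, $\delta(x)(wa)=\delta(\delta(x)(w))(a)$. It is reachable if every $x\in X$ equals $\delta(\overline{x})(u)$ for some $u\in\Sigma^\ast$. A morphism $h:(X,\overline{x},\delta_X)\to(Y,\overline{y},\delta_Y)$ is a map $h:X\to Y$ with $h(\overline{x})=\overline{y}$ and $h(\delta_X(x)(a))=\delta_Y(h(x))(a)$ for all $x\in X,a\in\Sigma$. $\mathrm{Alg}_r(G_1)$ is the category of reachable pointed automata and such morphisms. For a pointed automaton, $\delta^\sharp:\Sigma^\ast\to X^X$ is the monoid homomorphism (into $X^X$ under composition) $\delta^\sharp(u)(x)=\delta(x)(u)$, so $\ker\delta^\sharp=\{(u,v)\in\Sigma^\ast\times\Sigma^\ast\mid \forall x\in X:\ \delta(x)(u)=\delta(x)(v)\}$. $\mathcal{C}$ is the category whose objects are congruences on the monoid $\Sigma^\ast$ and whose morphisms are inclusions (so it is a preorder). *)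

theory Defs
  imports Main
begin

definition delta_star :: "('s \<Rightarrow> 'a \<Rightarrow> 's) \<Rightarrow> 's \<Rightarrow> 'a list \<Rightarrow> 's" where
  "delta_star \<delta> x w = foldl \<delta> x w"

definition is_automaton :: "'s set \<Rightarrow> 's \<Rightarrow> ('s \<Rightarrow> 'a \<Rightarrow> 's) \<Rightarrow> bool" where
  "is_automaton X x0 \<delta> \<longleftrightarrow> x0 \<in> X \<and> (\<forall>x\<in>X. \<forall>a. \<delta> x a \<in> X)"

definition reachable_aut :: "'s set \<Rightarrow> 's \<Rightarrow> ('s \<Rightarrow> 'a \<Rightarrow> 's) \<Rightarrow> bool" where
  "reachable_aut X x0 \<delta> \<longleftrightarrow> is_automaton X x0 \<delta> \<and> (\<forall>x\<in>X. \<exists>u. x = delta_star \<delta> x0 u)"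

definition aut_morph ::
  "'s set \<Rightarrow> 's \<Rightarrow> ('s \<Rightarrow> 'a \<Rightarrow> 's) \<Rightarrow> 't set \<Rightarrow> 't \<Rightarrow> ('t \<Rightarrow> 'a \<Rightarrow> 't) \<Rightarrow> ('s \<Rightarrow> 't) \<Rightarrow> bool" where
  "aut_morph X x0 \<delta> Y y0 \<gamma> h \<longleftrightarrow>
     (\<forall>x\<in>X. h x \<in> Y) \<and> h x0 = y0 \<and> (\<forall>x\<in>X. \<forall>a. h (\<delta> x a) = \<gamma> (h x) a)"

definition ker_aut :: "'s set \<Rightarrow> ('s \<Rightarrow> 'a \<Rightarrow> 's) \<Rightarrow> ('a list \<times> 'a list) set" where
  "ker_aut X \<delta> = {(u, v). \<forall>x\<in>X. delta_star \<delta> x u = delta_star \<delta> x v}"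

definition monoid_congruence :: "('a list \<times> 'a list) set \<Rightarrow> bool" where
  "monoid_congruence C \<longleftrightarrow> equiv UNIV C \<and>
     (\<forall>u v x y. (u, v) \<in> C \<longrightarrow> (x, y) \<in> C \<longrightarrow> (u @ x, v @ y) \<in> C)"

text \<open>The functor M on objects: carrier Sigma*/C, point [epsilon]_C, transition sigma_C
(defined via a chosen representative).\<close>
definition M_carrier :: "('a list \<times> 'a list) set \<Rightarrow> 'a list set set" where
  "M_carrier C = UNIV // C"

definition M_point :: "('a list \<times> 'a list) set \<Rightarrow> 'a list set" where
  "M_point C = C `` {[]}"

definition M_trans :: "('a list \<times> 'a list) set \<Rightarrow> 'a list set \<Rightarrow> 'a \<Rightarrow> 'a list set" where
  "M_trans C q a = C `` {(SOME w. w \<in> q) @ [a]}"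

definition M_mor :: "('a list \<times> 'a list) set \<Rightarrow> ('a list \<times> 'a list) set \<Rightarrow> 'a list set \<Rightarrow> 'a list set" where
  "M_mor C D q = D `` {SOME w. w \<in> q}"

end

theory Submission
  imports Defs
begin

text \<open>The kernel of \<open>\<delta>\<^sup>\<sharp>\<close> is a congruence because \<open>\<delta>\<^sup>\<sharp>\<close> is a monoid homomorphism, and a
morphism of automata commutes with running words, so on a reachable target it can only enlarge
the kernel. In \<open>M C\<close> the word \<open>w\<close> leads from \<open>[\<epsilon>]\<^sub>C\<close> to \<open>[w]\<^sub>C\<close>; hence a morphism \<open>M C \<rightarrow> A\<close>
is forced to send \<open>[w]\<^sub>C\<close> to the state \<open>A\<close> reaches on \<open>w\<close>, and this assignment is well defined
exactly when \<open>C \<subseteq> ker \<delta>\<^sup>\<sharp>\<close>: every state of \<open>A\<close> is reached by some \<open>w\<close>, and \<open>C\<close> is stable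
under prefixing by \<open>w\<close>.\<close>

lemma delta_star_Nil [simp]: "delta_star \<delta> x [] = x"
  by (simp add: delta_star_def)

lemma delta_star_append [simp]: "delta_star \<delta> x (u @ v) = delta_star \<delta> (delta_star \<delta> x u) v"
  by (simp add: delta_star_def)

lemma delta_star_singleton [simp]: "delta_star \<delta> x [a] = \<delta> x a"
  by (simp add: delta_star_def)

lemma delta_star_closed:
  assumes "is_automaton X x0 \<delta>" and "x \<in> X"
  shows "delta_star \<delta> x u \<in> X"
  using assms by (induction u arbitrary: x) (auto simp: is_automaton_def delta_star_def)

lemma reachable_aut_is_automaton: "reachable_aut X x0 \<delta> \<Longrightarrow> is_automaton X x0 \<delta>"
  by (simp add: reachable_aut_def)

lemma is_automaton_point: "is_automaton X x0 \<delta> \<Longrightarrow> x0 \<in> X"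
  by (simp add: is_automaton_def)

lemma aut_morph_delta_star:
  assumes "aut_morph X x0 \<delta> Y y0 \<gamma> h" and "is_automaton X x0 \<delta>" and "x \<in> X"
  shows "h (delta_star \<delta> x u) = delta_star \<gamma> (h x) u"
proof (induction u rule: rev_induct)
  case (snoc a u)
  have "delta_star \<delta> x u \<in> X" using assms(2,3) by (rule delta_star_closed)
  with snoc.IH show ?case using assms(1) by (simp add: aut_morph_def)
qed simp

lemma aut_morph_delta_star_point:
  assumes "aut_morph X x0 \<delta> Y y0 \<gamma> h" and "is_automaton X x0 \<delta>"
  shows "h (delta_star \<delta> x0 u) = delta_star \<gamma> y0 u"
  using aut_morph_delta_star[OF assms is_automaton_point[OF assms(2)]] assms(1)
  by (simp add: aut_morph_def)

lemma ker_aut_monoid_congruence: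
  assumes "is_automaton X x0 \<delta>"
  shows "monoid_congruence (ker_aut X \<delta>)"
  unfolding monoid_congruence_def
proof (intro conjI allI impI)
  show "equiv UNIV (ker_aut X \<delta>)"
    by (rule equivI) (auto simp: ker_aut_def refl_on_def sym_def trans_def)
next
  fix u v x y
  assume "(u, v) \<in> ker_aut X \<delta>" and "(x, y) \<in> ker_aut X \<delta>"
  moreover have "delta_star \<delta> p v \<in> X" if "p \<in> X" for p
    using assms that by (rule delta_star_closed)
  ultimately show "(u @ x, v @ y) \<in> ker_aut X \<delta>"
    by (simp add: ker_aut_def)
qed

lemma ker_aut_mono:
  assumes "is_automaton X x0 \<delta>" and "reachable_aut Y y0 \<gamma>" and "aut_morph X x0 \<delta> Y y0 \<gamma> h"
  shows "ker_aut X \<delta> \<subseteq> ker_aut Y \<gamma>"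
proof (clarsimp simp: ker_aut_def)
  fix u v y
  assume ker: "\<forall>x\<in>X. delta_star \<delta> x u = delta_star \<delta> x v" and "y \<in> Y"
  then obtain w where "y = delta_star \<gamma> y0 w"
    using assms(2) by (auto simp: reachable_aut_def)
  then have y: "y = h (delta_star \<delta> x0 w)"
    using aut_morph_delta_star_point[OF assms(3,1)] by simp
  have x: "delta_star \<delta> x0 w \<in> X"
    using assms(1) is_automaton_point[OF assms(1)] by (rule delta_star_closed)
  show "delta_star \<gamma> y u = delta_star \<gamma> y v"
    using ker x unfolding y aut_morph_delta_star[OF assms(3,1) x, symmetric] by simp
qed

lemma monoid_congruence_equiv: "monoid_congruence C \<Longrightarrow> equiv UNIV C"
  by (simp add: monoid_congruence_def)

lemma monoid_congruence_refl: "monoid_congruence C \<Longrightarrow> (w, w) \<in> C"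
  by (auto simp: monoid_congruence_def equiv_def refl_on_def)

lemma monoid_congruence_append:
  "monoid_congruence C \<Longrightarrow> (u, v) \<in> C \<Longrightarrow> (x, y) \<in> C \<Longrightarrow> (u @ x, v @ y) \<in> C"
  by (simp add: monoid_congruence_def)

lemma monoid_congruence_class_eq_iff:
  "monoid_congruence C \<Longrightarrow> C `` {u} = C `` {v} \<longleftrightarrow> (u, v) \<in> C"
  by (simp add: eq_equiv_class_iff[OF monoid_congruence_equiv UNIV_I UNIV_I])

lemma monoid_congruence_some_class:
  assumes "monoid_congruence C"
  shows "(SOME x. x \<in> C `` {w}, w) \<in> C"
proof -
  have "w \<in> C `` {w}" using assms by (simp add: monoid_congruence_refl)
  then have "(SOME x. x \<in> C `` {w}) \<in> C `` {w}" by (rule someI)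
  then show ?thesis using monoid_congruence_equiv[OF assms] by (meson Image_singleton_iff equiv_def symD)
qed

lemma M_trans_class:
  assumes "monoid_congruence C"
  shows "M_trans C (C `` {w}) a = C `` {w @ [a]}"
proof -
  have "((SOME x. x \<in> C `` {w}) @ [a], w @ [a]) \<in> C"
    using assms monoid_congruence_some_class[OF assms] monoid_congruence_refl[OF assms]
    by (rule monoid_congruence_append)
  then show ?thesis
    by (simp add: M_trans_def monoid_congruence_class_eq_iff[OF assms])
qed

lemma M_mor_class:
  assumes "monoid_congruence C" and "monoid_congruence D" and "C \<subseteq> D"
  shows "M_mor C D (C `` {w}) = D `` {w}"
  using assms monoid_congruence_some_class[OF assms(1), of w]
  by (auto simp: M_mor_def monoid_congruence_class_eq_iff[OF assms(2)])

lemma M_carrier_class: "C `` {w} \<in> M_carrier C"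
  by (simp add: M_carrier_def quotientI)

lemma M_carrierE:
  assumes "q \<in> M_carrier C"
  obtains w where "q = C `` {w}"
  using assms by (auto simp: M_carrier_def elim: quotientE)

lemma delta_star_M_point:
  assumes "monoid_congruence C"
  shows "delta_star (M_trans C) (M_point C) w = C `` {w}"
  by (induction w rule: rev_induct) (simp_all add: M_point_def M_trans_class[OF assms])

lemma reachable_aut_M:
  assumes "monoid_congruence C"
  shows "reachable_aut (M_carrier C) (M_point C) (M_trans C)"
  unfolding reachable_aut_def is_automaton_def
proof (intro conjI ballI allI)
  show "M_point C \<in> M_carrier C" unfolding M_point_def by (rule M_carrier_class)
  fix q assume "q \<in> M_carrier C"
  then obtain w where w: "q = C `` {w}" by (rule M_carrierE)
  then show "\<exists>u. q = delta_star (M_trans C) (M_point C) u"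
    using delta_star_M_point[OF assms] by metis
  show "M_trans C q a \<in> M_carrier C" for a
    unfolding w M_trans_class[OF assms] by (rule M_carrier_class)
qed

lemma aut_morph_M_mor:
  assumes "monoid_congruence C" and "monoid_congruence D" and "C \<subseteq> D"
  shows "aut_morph (M_carrier C) (M_point C) (M_trans C) (M_carrier D) (M_point D) (M_trans D)
           (M_mor C D)"
  unfolding aut_morph_def
proof (intro conjI ballI allI)
  note mor = M_mor_class[OF assms]
  show "M_mor C D (M_point C) = M_point D" unfolding M_point_def mor ..
  fix q assume "q \<in> M_carrier C"
  then obtain w where w: "q = C `` {w}" by (rule M_carrierE)
  show "M_mor C D q \<in> M_carrier D" unfolding w mor by (rule M_carrier_class)
  show "M_mor C D (M_trans C q a) = M_trans D (M_mor C D q) a" for a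
    unfolding w mor M_trans_class[OF assms(1)] M_trans_class[OF assms(2)] ..
qed

lemma M_mor_id:
  assumes "monoid_congruence C" and "q \<in> M_carrier C"
  shows "M_mor C C q = q"
  using assms(2) by (rule M_carrierE) (simp add: M_mor_class[OF assms(1,1) order_refl])

lemma M_mor_comp:
  assumes "monoid_congruence C" "monoid_congruence D" "monoid_congruence E"
    and "C \<subseteq> D" "D \<subseteq> E" and "q \<in> M_carrier C"
  shows "M_mor D E (M_mor C D q) = M_mor C E q"
  using assms(6)
  by (rule M_carrierE) (use assms in \<open>simp add: M_mor_class order_trans[OF assms(4,5)]\<close>)

lemma aut_morph_from_M_class:
  assumes "monoid_congruence C" and "aut_morph (M_carrier C) (M_point C) (M_trans C) X x0 \<delta> h"
  shows "h (C `` {w}) = delta_star \<delta> x0 w"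
  using aut_morph_delta_star_point[OF assms(2)] reachable_aut_M[OF assms(1)]
  by (simp add: reachable_aut_def delta_star_M_point[OF assms(1)])

lemma aut_morph_from_M_unique:
  assumes "monoid_congruence C"
    and "aut_morph (M_carrier C) (M_point C) (M_trans C) X x0 \<delta> h1"
    and "aut_morph (M_carrier C) (M_point C) (M_trans C) X x0 \<delta> h2"
    and "q \<in> M_carrier C"
  shows "h1 q = h2 q"
  using assms(4)
  by (rule M_carrierE) (simp add: aut_morph_from_M_class[OF assms(1,2)] aut_morph_from_M_class[OF assms(1,3)])

lemma aut_morph_from_M_imp_subset_ker_aut:
  assumes "monoid_congruence C" and "reachable_aut X x0 \<delta>"
    and "aut_morph (M_carrier C) (M_point C) (M_trans C) X x0 \<delta> h"
  shows "C \<subseteq> ker_aut X \<delta>"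
proof (clarsimp simp: ker_aut_def)
  fix u v x
  assume "(u, v) \<in> C" and "x \<in> X"
  then obtain w where x: "x = delta_star \<delta> x0 w"
    using assms(2) by (auto simp: reachable_aut_def)
  have "(w @ u, w @ v) \<in> C"
    using assms(1) monoid_congruence_refl[OF assms(1)] \<open>(u, v) \<in> C\<close>
    by (rule monoid_congruence_append)
  then have "C `` {w @ u} = C `` {w @ v}"
    by (simp add: monoid_congruence_class_eq_iff[OF assms(1)])
  then have "delta_star \<delta> x0 (w @ u) = delta_star \<delta> x0 (w @ v)"
    by (metis aut_morph_from_M_class[OF assms(1,3)])
  then show "delta_star \<delta> x u = delta_star \<delta> x v"
    unfolding x by simp
qed

lemma subset_ker_aut_imp_aut_morph_from_M:
  assumes "monoid_congruence C" and "is_automaton X x0 \<delta>" and "C \<subseteq> ker_aut X \<delta>"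
  shows "aut_morph (M_carrier C) (M_point C) (M_trans C) X x0 \<delta>
           (\<lambda>q. delta_star \<delta> x0 (SOME w. w \<in> q))"
proof -
  have x0: "x0 \<in> X" using assms(2) by (rule is_automaton_point)
  have rep: "delta_star \<delta> x0 (SOME x. x \<in> C `` {w}) = delta_star \<delta> x0 w" for w
    using monoid_congruence_some_class[OF assms(1), of w] assms(3) x0 by (auto simp: ker_aut_def)
  show ?thesis
    unfolding aut_morph_def
  proof (intro conjI ballI allI)
    show "delta_star \<delta> x0 (SOME w. w \<in> M_point C) = x0"
      unfolding M_point_def rep by simp
    fix q assume "q \<in> M_carrier C"
    then obtain w where w: "q = C `` {w}" by (rule M_carrierE)
    show "delta_star \<delta> x0 (SOME w. w \<in> q) \<in> X"
      using assms(2) x0 by (rule delta_star_closed)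
    show "delta_star \<delta> x0 (SOME w. w \<in> M_trans C q a) = \<delta> (delta_star \<delta> x0 (SOME w. w \<in> q)) a"
      for a unfolding w M_trans_class[OF assms(1)] rep by simp
  qed
qed

theorem mainTheorem1:
  fixes dummy :: "'a::finite itself"
  shows
  \<comment> \<open>T is well defined on objects\<close>
  "(\<forall>(X :: 's set) x0 (\<delta> :: 's \<Rightarrow> 'a \<Rightarrow> 's). reachable_aut X x0 \<delta> \<longrightarrow>
       monoid_congruence (ker_aut X \<delta>))
   \<comment> \<open>T is well defined on morphisms\<close>
   \<and> (\<forall>(X :: 's set) x0 (\<delta> :: 's \<Rightarrow> 'a \<Rightarrow> 's) (Y :: 't set) y0 \<gamma> h.
        reachable_aut X x0 \<delta> \<longrightarrow> reachable_aut Y y0 \<gamma> \<longrightarrow> aut_morph X x0 \<delta> Y y0 \<gamma> h \<longrightarrow>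
        ker_aut X \<delta> \<subseteq> ker_aut Y \<gamma>)
   \<comment> \<open>M is well defined on objects\<close>
   \<and> (\<forall>C :: ('a list \<times> 'a list) set. monoid_congruence C \<longrightarrow>
        reachable_aut (M_carrier C) (M_point C) (M_trans C)
        \<and> (\<forall>w a. M_trans C (C `` {w}) a = C `` {w @ [a]}))
   \<comment> \<open>M is well defined on morphisms and functorial\<close>
   \<and> (\<forall>C D :: ('a list \<times> 'a list) set. monoid_congruence C \<longrightarrow> monoid_congruence D \<longrightarrow> C \<subseteq> D \<longrightarrow>
        (\<forall>w. M_mor C D (C `` {w}) = D `` {w})
        \<and> aut_morph (M_carrier C) (M_point C) (M_trans C) (M_carrier D) (M_point D) (M_trans D) (M_mor C D))
   \<and> (\<forall>C :: ('a list \<times> 'a list) set. monoid_congruence C \<longrightarrow> (\<forall>q\<in>M_carrier C. M_mor C C q = q))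
   \<and> (\<forall>C D E :: ('a list \<times> 'a list) set. monoid_congruence C \<longrightarrow> monoid_congruence D \<longrightarrow>
        monoid_congruence E \<longrightarrow> C \<subseteq> D \<longrightarrow> D \<subseteq> E \<longrightarrow>
        (\<forall>q\<in>M_carrier C. M_mor D E (M_mor C D q) = M_mor C E q))
   \<comment> \<open>M is left adjoint to T: Hom(M C, A) \<cong> Hom(C, T A), where the latter is a subsingleton
       (nonempty iff C \<subseteq> T A); naturality is automatic since C is a preorder\<close>
   \<and> (\<forall>(C :: ('a list \<times> 'a list) set) (X :: 's set) x0 (\<delta> :: 's \<Rightarrow> 'a \<Rightarrow> 's).
        monoid_congruence C \<longrightarrow> reachable_aut X x0 \<delta> \<longrightarrow>
        ((\<exists>h. aut_morph (M_carrier C) (M_point C) (M_trans C) X x0 \<delta> h) \<longleftrightarrow> C \<subseteq> ker_aut X \<delta>)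
        \<and> (\<forall>h1 h2. aut_morph (M_carrier C) (M_point C) (M_trans C) X x0 \<delta> h1 \<longrightarrow>
                   aut_morph (M_carrier C) (M_point C) (M_trans C) X x0 \<delta> h2 \<longrightarrow>
                   (\<forall>q\<in>M_carrier C. h1 q = h2 q)))"
proof (intro conjI allI impI ballI)
  fix C :: "('a list \<times> 'a list) set" and X :: "'s set" and x0 and \<delta> :: "'s \<Rightarrow> 'a \<Rightarrow> 's"
  assume C: "monoid_congruence C" and X: "reachable_aut X x0 \<delta>"
  show "(\<exists>h. aut_morph (M_carrier C) (M_point C) (M_trans C) X x0 \<delta> h) \<longleftrightarrow> C \<subseteq> ker_aut X \<delta>"
    using aut_morph_from_M_imp_subset_ker_aut[OF C X]
      subset_ker_aut_imp_aut_morph_from_M[OF C reachable_aut_is_automaton[OF X]] by blast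
qed (rule ker_aut_monoid_congruence[OF reachable_aut_is_automaton]
      ker_aut_mono[OF reachable_aut_is_automaton] reachable_aut_M M_trans_class M_mor_class
      aut_morph_M_mor M_mor_id M_mor_comp aut_morph_from_M_unique; assumption)+

end
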